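(* Let $s,t\in\mathbb{R}$ with $s\ne0$, $t\ne0$, $s^2+4t>0$, and $q=\varphi'_{s,t}/\varphi_{s,t}$. (1) If $\lvert q\rvert<1$, then $\mathrm{Exp}'_{s,t}(z)=\prod_{k=0}^\infty\Big(1+(\varphi_{s,t}-\varphi'_{s,t})\frac{\varphi_{s,t}'^{\,k}}{\varphi_{s,t}^{k+1}}z\Big)$. (2) If $\lvert q\rvert>1$, then on the disk of convergence of its series, $\mathrm{Exp}'_{s,t}(z)=\prod_{k=0}^\infty\frac{\varphi_{s,t}'^{\,k+1}}{\varphi_{s,t}'^{\,k+1}+(\varphi_{s,t}-\varphi'_{s,t})\varphi_{s,t}^{k}z}$, and this product gives the meromorphic continuation of $\mathrm{Exp}'_{s,t}$ to $\mathbb{C}$.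
   Context: $\varphi_{s,t}=\frac{s+\sqrt{s^2+4t}}{2}$, $\varphi'_{s,t}=\frac{s-\sqrt{s^2+4t}}{2}$. Generalized Fibonacci polynomials: $\{0\}_{s,t}=0$, $\{1\}_{s,t}=1$, $\{n+2\}_{s,t}=s\{n+1\}_{s,t}+t\{n\}_{s,t}$; Fibotorial $\{n\}_{s,t}!=\prod_{k=1}^n\{k\}_{s,t}$, $\{0\}_{s,t}!=1$. $\mathrm{Exp}'_{s,t}(z)=\sum_{n=0}^\infty\varphi_{s,t}'^{\,\binom n2}\frac{z^n}{\{n\}_{s,t}!}$. *)

theory Defs
  imports "HOL-Analysis.Analysis" "HOL-Complex_Analysis.Complex_Analysis"
begin

definition phi :: "real \<Rightarrow> real \<Rightarrow> real" where
  "phi s t = (s + sqrt (s\<^sup>2 + 4 * t)) / 2"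

definition phi' :: "real \<Rightarrow> real \<Rightarrow> real" where
  "phi' s t = (s - sqrt (s\<^sup>2 + 4 * t)) / 2"

fun gfib :: "real \<Rightarrow> real \<Rightarrow> nat \<Rightarrow> real" where
  "gfib s t 0 = 0"
| "gfib s t (Suc 0) = 1"
| "gfib s t (Suc (Suc n)) = s * gfib s t (Suc n) + t * gfib s t n"

definition fibotorial :: "real \<Rightarrow> real \<Rightarrow> nat \<Rightarrow> real" where
  "fibotorial s t n = (\<Prod>k=1..n. gfib s t k)"

definition Exp'_coeff :: "real \<Rightarrow> real \<Rightarrow> nat \<Rightarrow> complex" where
  "Exp'_coeff s t n = complex_of_real (phi' s t ^ (n choose 2) / fibotorial s t n)"

definition Exp' :: "real \<Rightarrow> real \<Rightarrow> complex \<Rightarrow> complex" where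
  "Exp' s t z = (\<Sum>n. Exp'_coeff s t n * z ^ n)"

end

theory Submission
  imports Defs
begin

text \<open>
  Put a = phi s t, b = phi' s t and r = b / a = q. Binet's formula {n} = (a^n - b^n) / (a - b)
  identifies the coefficients of Exp' with those of Euler's q-exponential,
  prod_{j<n} d r^j / (1 - r^(j+1)) with d = 1 - r, and the corresponding series E satisfies
  E(y) = (1 + d y) E(r y). For |r| < 1, iterating gives E(z) = (prod_{k<n} (1 + d r^k z)) E(r^n z),
  and continuity of E at 0 yields Euler's product. For |r| > 1, put p = 1 / r and read the
  equation backwards: E(p^n z) = (prod_{k<n} (1 + d p^(k+1) z)) E(z) inside the disc of
  convergence, and letting n tend to infinity shows that E is the reciprocal of the entire
  function prod_k (1 + d p^(k+1) z).
\<close>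

definition euler_coeff :: "'a::field \<Rightarrow> 'a \<Rightarrow> nat \<Rightarrow> 'a" where
  "euler_coeff r d n = (\<Prod>j<n. d * r ^ j / (1 - r ^ Suc j))"

definition euler_series :: "'a::{real_normed_field,banach} \<Rightarrow> 'a \<Rightarrow> 'a \<Rightarrow> 'a" where
  "euler_series r d z = (\<Sum>n. euler_coeff r d n * z ^ n)"

lemma euler_coeff_0 [simp]: "euler_coeff r d 0 = 1"
  by (simp add: euler_coeff_def)

lemma euler_coeff_Suc: "euler_coeff r d (Suc n) = euler_coeff r d n * (d * r ^ n / (1 - r ^ Suc n))"
  by (simp add: euler_coeff_def)

lemma of_real_euler_coeff:
  "(of_real (euler_coeff r d n) :: 'a::real_field) = euler_coeff (of_real r) (of_real d) n"
  by (simp add: euler_coeff_def of_real_prod)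

lemma euler_series_0 [simp]: "euler_series r d 0 = 1"
  by (simp add: euler_series_def)

lemma power_Suc_ne_one:
  fixes r :: "'a::real_normed_div_algebra"
  assumes "norm r \<noteq> 1"
  shows "r ^ Suc n \<noteq> 1"
proof
  assume "r ^ Suc n = 1"
  then have "norm r ^ Suc n = 1 ^ Suc n" by (metis norm_one norm_power power_one)
  with assms show False by (metis norm_ge_zero power_eq_imp_eq_base zero_le_one zero_less_Suc)
qed

lemma summable_euler_series:
  fixes r d z :: "'a::{real_normed_field,banach}"
  assumes "norm r < 1"
  shows "summable (\<lambda>n. euler_coeff r d n * z ^ n)"
proof -
  have "(\<lambda>n. d * r ^ n / (1 - r ^ Suc n) * z) \<longlonglongrightarrow> d * 0 / (1 - 0) * z"
    using assms by (intro tendsto_intros LIMSEQ_Suc LIMSEQ_power_zero) auto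
  then have "(\<lambda>n. norm (d * r ^ n / (1 - r ^ Suc n) * z)) \<longlonglongrightarrow> 0"
    by (simp add: tendsto_norm_zero)
  from order_tendstoD(2)[OF this, of "1/2"] obtain N
    where N: "\<And>n. n \<ge> N \<Longrightarrow> norm (d * r ^ n / (1 - r ^ Suc n) * z) < 1/2"
    by (auto simp: eventually_sequentially)
  show ?thesis
  proof (rule summable_ratio_test[of "1/2" N])
    fix n assume "n \<ge> N"
    then have "norm (d * r ^ n / (1 - r ^ Suc n) * z) * norm (euler_coeff r d n * z ^ n)
               \<le> 1/2 * norm (euler_coeff r d n * z ^ n)"
      using N by (intro mult_right_mono) (auto intro: less_imp_le)
    then show "norm (euler_coeff r d (Suc n) * z ^ Suc n) \<le> 1/2 * norm (euler_coeff r d n * z ^ n)"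
      by (simp add: euler_coeff_Suc norm_mult[symmetric] mult_ac)
  qed simp
qed

lemma euler_series_functional_equation:
  fixes r d y :: "'a::{real_normed_field,banach}"
  assumes r: "norm r \<noteq> 1"
    and sy: "summable (\<lambda>n. euler_coeff r d n * y ^ n)"
    and sry: "summable (\<lambda>n. euler_coeff r d n * (r * y) ^ n)"
  shows "euler_series r d y = (1 + d * y) * euler_series r d (r * y)"
proof -
  define g where "g n = euler_coeff r d n * y ^ n - euler_coeff r d n * (r * y) ^ n" for n
  have g_Suc: "g (Suc n) = d * y * (euler_coeff r d n * (r * y) ^ n)" for n
  proof -
    have "g (Suc n) = euler_coeff r d (Suc n) * (1 - r ^ Suc n) * y ^ Suc n"
      by (simp add: g_def algebra_simps power_mult_distrib)
    also have "euler_coeff r d (Suc n) * (1 - r ^ Suc n) = euler_coeff r d n * d * r ^ n"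
      using power_Suc_ne_one[OF r, of n] by (simp add: euler_coeff_Suc)
    finally show ?thesis by (simp add: power_mult_distrib mult_ac)
  qed
  have "euler_series r d y - euler_series r d (r * y) = suminf g"
    unfolding euler_series_def g_def using sy sry by (rule suminf_diff)
  also have "\<dots> = (\<Sum>n. g (Suc n))"
    using suminf_split_head[of g] summable_diff[OF sy sry] by (simp add: g_def[abs_def])
  also have "\<dots> = d * y * euler_series r d (r * y)"
    unfolding g_Suc euler_series_def using sry by (rule suminf_mult)
  finally show ?thesis by (simp add: algebra_simps)
qed

lemma tendsto_at_scaled_argument:
  fixes r z :: "'a::real_normed_div_algebra"
  assumes "norm r < 1" and "isCont G 0"
  shows "(\<lambda>n. G (r ^ n * z)) \<longlonglongrightarrow> G 0"
proof -
  have "(\<lambda>n. r ^ n * z) \<longlonglongrightarrow> 0 * z"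
    using assms(1) by (intro tendsto_intros LIMSEQ_power_zero)
  then show ?thesis using isCont_tendsto_compose[OF assms(2)] by simp
qed

lemma euler_product_has_prod:
  fixes r d z :: "'a::{real_normed_field,banach}"
  assumes r: "norm r < 1"
  shows "(\<lambda>k. 1 + d * r ^ k * z) has_prod euler_series r d z"
proof -
  have summable: "summable (\<lambda>n. euler_coeff r d n * w ^ n)" for w
    using r by (rule summable_euler_series)
  have iterate: "euler_series r d z = (\<Prod>k<n. 1 + d * r ^ k * z) * euler_series r d (r ^ n * z)" for n
  proof (induction n)
    case (Suc n)
    have "euler_series r d (r ^ n * z) = (1 + d * (r ^ n * z)) * euler_series r d (r * (r ^ n * z))"
      using r by (intro euler_series_functional_equation summable) auto
    then have "euler_series r d (r ^ n * z) = (1 + d * r ^ n * z) * euler_series r d (r ^ Suc n * z)"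
      by (simp add: mult.assoc)
    with Suc.IH show ?case by (simp add: mult.assoc)
  qed simp
  have "summable (\<lambda>k. norm (d * z) * norm r ^ k)"
    using r by (intro summable_mult summable_geometric) auto
  then have "convergent_prod (\<lambda>k. 1 + d * r ^ k * z)"
    by (intro abs_convergent_prod_imp_convergent_prod summable_imp_abs_convergent_prod)
       (simp add: norm_mult norm_power mult_ac)
  then obtain P where P: "(\<lambda>k. 1 + d * r ^ k * z) has_prod P"
    using convergent_prod_has_prod by blast
  have cont: "isCont (euler_series r d) 0"
    unfolding euler_series_def using summable by (rule isCont_powser_converges_everywhere)
  have "(\<lambda>n. (\<Prod>k<n. 1 + d * r ^ k * z) * euler_series r d (r ^ n * z)) \<longlonglongrightarrow> P * 1"
    using has_prod_imp_tendsto'[OF P] tendsto_at_scaled_argument[OF r cont] by (intro tendsto_mult) auto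
  then have "euler_series r d z = P"
    unfolding iterate[symmetric] by (simp add: LIMSEQ_const_iff)
  with P show ?thesis by simp
qed

lemma euler_product_shifted_has_prod:
  fixes p d z :: "'a::{real_normed_field,banach}"
  assumes "norm p < 1"
  shows "(\<lambda>k. 1 + d * p ^ Suc k * z) has_prod euler_series p (d * p) z"
  using euler_product_has_prod[OF assms, of "d * p" z] by (simp add: mult_ac)

lemma summable_euler_series_in_disc:
  fixes r d z w :: "'a::{real_normed_field,banach}"
  assumes "ereal (norm z) < conv_radius (euler_coeff r d)" and "norm w \<le> norm z"
  shows "summable (\<lambda>n. euler_coeff r d n * w ^ n)"
  using assms by (intro summable_in_conv_radius) (meson ereal_less_eq(3) order_le_less_trans)

lemma euler_series_scaled_by_inverse:
  fixes r d z :: "'a::{real_normed_field,banach}"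
  assumes r: "norm r > 1" and z: "ereal (norm z) < conv_radius (euler_coeff r d)"
  shows "euler_series r d (inverse r ^ n * z) = (\<Prod>k<n. 1 + d * inverse r ^ Suc k * z) * euler_series r d z"
proof (induction n)
  case (Suc n)
  have "r \<noteq> 0"
    using r by auto
  have small: "norm (inverse r ^ k * z) \<le> norm z" for k
  proof -
    have "norm (inverse r) ^ k \<le> 1"
      using r by (intro power_le_one) (simp_all add: norm_inverse inverse_le_1_iff)
    then show ?thesis
      by (simp add: norm_mult norm_power mult_left_le_one_le)
  qed
  have ry: "r * (inverse r ^ Suc n * z) = inverse r ^ n * z"
    using \<open>r \<noteq> 0\<close> by (simp add: mult.assoc[symmetric])
  have "euler_series r d (inverse r ^ Suc n * z) =
      (1 + d * (inverse r ^ Suc n * z)) * euler_series r d (r * (inverse r ^ Suc n * z))"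
    using r by (intro euler_series_functional_equation summable_euler_series_in_disc[OF z])
      (simp_all only: ry small)
  also have "\<dots> = (1 + d * inverse r ^ Suc n * z) * euler_series r d (inverse r ^ n * z)"
    by (simp only: ry mult.assoc)
  also have "\<dots> = (\<Prod>k<Suc n. 1 + d * inverse r ^ Suc k * z) * euler_series r d z"
    by (simp only: Suc.IH prod.lessThan_Suc) (simp add: mult_ac)
  finally show ?case .
qed simp

lemma euler_series_reciprocal_has_prod:
  fixes r d z :: "'a::{real_normed_field,banach}"
  assumes r: "norm r > 1" and z: "ereal (norm z) < conv_radius (euler_coeff r d)"
  shows "(\<lambda>k. inverse (1 + d * inverse r ^ Suc k * z)) has_prod euler_series r d z"
proof (cases "z = 0")
  case False
  have p: "norm (inverse r) < 1"
    using r by (simp add: norm_inverse inverse_less_1_iff)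
  note H = euler_product_shifted_has_prod[OF p, of d z]
  have "isCont (euler_series r d) 0"
    unfolding euler_series_def
    by (rule isCont_powser[of _ "of_real (norm z)"])
       (use summable_euler_series_in_disc[OF z] False in auto)
  then have "(\<lambda>n. euler_series r d (inverse r ^ n * z)) \<longlonglongrightarrow> 1"
    using tendsto_at_scaled_argument[OF p] by fastforce
  moreover have "(\<lambda>n. euler_series r d (inverse r ^ n * z)) \<longlonglongrightarrow>
      euler_series (inverse r) (d * inverse r) z * euler_series r d z"
    unfolding euler_series_scaled_by_inverse[OF r z]
    using has_prod_imp_tendsto'[OF H] by (intro tendsto_mult) auto
  ultimately have "euler_series (inverse r) (d * inverse r) z * euler_series r d z = 1"
    using LIMSEQ_unique by metis
  then have "inverse (euler_series (inverse r) (d * inverse r) z) = euler_series r d z"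
    by (rule inverse_unique)
  with has_prod_inverse[OF H] show ?thesis by simp
qed simp

lemma euler_reciprocal_product_has_prod:
  fixes r d z :: "'a::{real_normed_field,banach}"
  assumes "norm r > 1"
  shows "(\<lambda>k. inverse (1 + d * inverse r ^ Suc k * z)) has_prod
           inverse (euler_series (inverse r) (d * inverse r) z)"
proof -
  have "norm (inverse r) < 1"
    using assms by (simp add: norm_inverse inverse_less_1_iff)
  then show ?thesis
    by (intro has_prod_inverse euler_product_shifted_has_prod)
qed

lemma euler_reciprocal_product_meromorphic:
  fixes r d :: complex
  assumes r: "norm r > 1"
  shows "(\<lambda>z. \<Prod>k. inverse (1 + d * inverse r ^ Suc k * z)) meromorphic_on UNIV"
proof -
  have p: "norm (inverse r) < 1"
    using r by (simp add: norm_inverse inverse_less_1_iff)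
  have "(\<Prod>k. inverse (1 + d * inverse r ^ Suc k * z)) =
      inverse (euler_series (inverse r) (d * inverse r) z)" for z
    using euler_reciprocal_product_has_prod[OF r] by (rule has_prod_unique[symmetric])
  moreover have "euler_series (inverse r) (d * inverse r) holomorphic_on UNIV"
    unfolding holomorphic_on_def field_differentiable_def euler_series_def
    using termdiffs_strong_converges_everywhere[OF summable_euler_series[OF p]] by blast
  ultimately show ?thesis
    by (simp add: analytic_on_open analytic_on_imp_meromorphic_on meromorphic_on_inverse)
qed

lemma phi_plus_phi': "phi s t + phi' s t = s"
  by (simp add: phi_def phi'_def field_simps)

lemma phi_minus_phi': "phi s t - phi' s t = sqrt (s\<^sup>2 + 4 * t)"
  by (simp add: phi_def phi'_def field_simps)

lemma phi_times_phi':
  assumes "s\<^sup>2 + 4 * t \<ge> 0"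
  shows "phi s t * phi' s t = - t"
proof -
  have "phi s t * phi' s t = (s\<^sup>2 - sqrt (s\<^sup>2 + 4 * t) ^ 2) / 4"
    by (simp add: phi_def phi'_def power2_eq_square field_simps)
  then show ?thesis using assms by simp
qed

lemma phi_nonzero:
  assumes "s\<^sup>2 + 4 * t \<ge> 0" and "t \<noteq> 0"
  shows "phi s t \<noteq> 0" and "phi' s t \<noteq> 0"
  using phi_times_phi'[OF assms(1)] assms(2) by auto

lemma gfib_binet:
  assumes "s = a + b" and "t = - (a * b)" and "a \<noteq> b"
  shows "gfib s t n = (a ^ n - b ^ n) / (a - b)"
  using assms
proof (induction s t n rule: gfib.induct)
  case (3 s t n)
  then have "gfib s t (Suc (Suc n)) =
      (a + b) * ((a ^ Suc n - b ^ Suc n) / (a - b)) - a * b * ((a ^ n - b ^ n) / (a - b))"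
    by simp
  also have "\<dots> = ((a + b) * (a ^ Suc n - b ^ Suc n) - a * b * (a ^ n - b ^ n)) / (a - b)"
    by (simp only: times_divide_eq_right diff_divide_distrib[symmetric])
  also have "\<dots> = (a ^ Suc (Suc n) - b ^ Suc (Suc n)) / (a - b)"
    by (simp add: algebra_simps)
  finally show ?case .
qed simp_all

lemma gfib_eq_phi:
  assumes "s\<^sup>2 + 4 * t > 0"
  shows "gfib s t n = (phi s t ^ n - phi' s t ^ n) / (phi s t - phi' s t)"
proof (rule gfib_binet)
  show "phi s t \<noteq> phi' s t"
    using assms phi_minus_phi'[of s t] by auto
qed (use assms phi_plus_phi' phi_times_phi' in auto)

lemma Exp'_coeff_eq_euler_coeff:
  assumes disc: "s\<^sup>2 + 4 * t > 0" and "t \<noteq> 0"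
  defines "a \<equiv> phi s t" and "b \<equiv> phi' s t"
  shows "Exp'_coeff s t = euler_coeff (of_real (b / a)) (of_real ((a - b) / a))"
proof -
  have "a \<noteq> 0"
    using phi_nonzero disc assms(2) by (simp add: a_def)
  have "b ^ (n choose 2) / fibotorial s t n = euler_coeff (b / a) ((a - b) / a) n" for n
  proof (induction n)
    case (Suc n)
    \<comment> \<open>If a^(n+1) = b^(n+1) (only possible for s = 0) both sides are x / 0 = 0.\<close>
    have ratio: "b ^ n / gfib s t (Suc n) = (a - b) / a * (b / a) ^ n / (1 - (b / a) ^ Suc n)"
      using \<open>a \<noteq> 0\<close> disc
      by (cases "a ^ Suc n = b ^ Suc n")
         (simp_all add: gfib_eq_phi a_def[symmetric] b_def[symmetric] power_divide field_simps)
    have "b ^ (Suc n choose 2) / fibotorial s t (Suc n) =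
        b ^ (n choose 2) / fibotorial s t n * (b ^ n / gfib s t (Suc n))"
      by (simp add: fibotorial_def numeral_2_eq_2 power_add)
    then show ?case
      by (simp only: Suc.IH ratio euler_coeff_Suc)
  qed (simp add: fibotorial_def binomial_eq_0)
  then show ?thesis
    by (simp add: fun_eq_iff Exp'_coeff_def of_real_euler_coeff b_def)
qed

lemma Exp'_eq_euler_series:
  assumes "s\<^sup>2 + 4 * t > 0" and "t \<noteq> 0"
  shows "Exp' s t = euler_series (of_real (phi' s t / phi s t)) (of_real ((phi s t - phi' s t) / phi s t))"
  using Exp'_coeff_eq_euler_coeff[OF assms] by (simp add: fun_eq_iff Exp'_def euler_series_def)

lemma Exp'_product_factor:
  "1 + complex_of_real ((a - b) * b ^ k / a ^ (k + 1)) * z =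
     1 + of_real ((a - b) / a) * of_real (b / a) ^ k * z"
  by (simp add: power_divide)

lemma Exp'_reciprocal_product_factor:
  assumes "a \<noteq> 0" and "b \<noteq> 0"
  shows "complex_of_real (b ^ (k + 1)) / (of_real (b ^ (k + 1)) + of_real ((a - b) * a ^ k) * z) =
      inverse (1 + of_real ((a - b) / a) * inverse (of_real (b / a)) ^ Suc k * z)"
proof -
  have "complex_of_real ((a - b) * a ^ k) =
      of_real (b ^ (k + 1)) * (of_real ((a - b) / a) * inverse (of_real (b / a)) ^ Suc k)"
    using assms by (simp add: power_divide field_simps)
  then have "complex_of_real (b ^ (k + 1)) + of_real ((a - b) * a ^ k) * z =
      of_real (b ^ (k + 1)) * (1 + of_real ((a - b) / a) * inverse (of_real (b / a)) ^ Suc k * z)"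
    by (simp add: algebra_simps)
  then show ?thesis
    using assms by (simp add: inverse_eq_divide)
qed

theorem mainTheorem10:
  fixes s t :: real
  assumes "s \<noteq> 0" and "t \<noteq> 0" and "s\<^sup>2 + 4 * t > 0"
  defines "q \<equiv> phi' s t / phi s t"
  shows
   "(\<bar>q\<bar> < 1 \<longrightarrow>
      (\<forall>z::complex.
         summable (\<lambda>n. Exp'_coeff s t n * z ^ n) \<and>
         (\<lambda>k. 1 + complex_of_real ((phi s t - phi' s t) * phi' s t ^ k / phi s t ^ (k + 1)) * z)
            has_prod Exp' s t z))
  \<and> (\<bar>q\<bar> > 1 \<longrightarrow>
      (\<forall>z::complex. ereal (norm z) < conv_radius (Exp'_coeff s t) \<longrightarrow>
         summable (\<lambda>n. Exp'_coeff s t n * z ^ n) \<and>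
         (\<lambda>k. complex_of_real (phi' s t ^ (k + 1)) /
               (complex_of_real (phi' s t ^ (k + 1)) + complex_of_real ((phi s t - phi' s t) * phi s t ^ k) * z))
            has_prod Exp' s t z)
    \<and> (\<forall>z::complex. (\<forall>k. complex_of_real (phi' s t ^ (k + 1)) + complex_of_real ((phi s t - phi' s t) * phi s t ^ k) * z \<noteq> 0) \<longrightarrow>
         convergent_prod (\<lambda>k. complex_of_real (phi' s t ^ (k + 1)) /
               (complex_of_real (phi' s t ^ (k + 1)) + complex_of_real ((phi s t - phi' s t) * phi s t ^ k) * z)))
    \<and> (\<lambda>z. \<Prod>k. complex_of_real (phi' s t ^ (k + 1)) /
               (complex_of_real (phi' s t ^ (k + 1)) + complex_of_real ((phi s t - phi' s t) * phi s t ^ k) * z))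
        meromorphic_on UNIV)"
proof -
  define r d where "r = complex_of_real (phi' s t / phi s t)"
    and "d = complex_of_real ((phi s t - phi' s t) / phi s t)"
  have norm_r: "\<bar>q\<bar> = norm r"
    by (simp add: q_def r_def norm_divide)
  note nonzero = phi_nonzero[OF less_imp_le[OF assms(3)] assms(2)]
  show ?thesis
    unfolding norm_r Exp'_coeff_eq_euler_coeff[OF assms(3,2)] Exp'_eq_euler_series[OF assms(3,2)]
      Exp'_product_factor Exp'_reciprocal_product_factor[OF nonzero] r_def[symmetric] d_def[symmetric]
  proof (intro conjI impI allI)
    fix z :: complex
    assume "norm r < 1"
    then show "summable (\<lambda>n. euler_coeff r d n * z ^ n)"
      and "(\<lambda>k. 1 + d * r ^ k * z) has_prod euler_series r d z"
      by (simp_all add: summable_euler_series euler_product_has_prod)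
  next
    fix z :: complex
    assume "norm r > 1" and z: "ereal (norm z) < conv_radius (euler_coeff r d)"
    then show "(\<lambda>k. inverse (1 + d * inverse r ^ Suc k * z)) has_prod euler_series r d z"
      by (rule euler_series_reciprocal_has_prod)
    show "summable (\<lambda>n. euler_coeff r d n * z ^ n)"
      using z by (rule summable_in_conv_radius)
  next
    fix z :: complex
    assume "norm r > 1"
    then show "convergent_prod (\<lambda>k. inverse (1 + d * inverse r ^ Suc k * z))"
      using euler_reciprocal_product_has_prod has_prod_iff by blast
  next
    assume "norm r > 1"
    then show "(\<lambda>z. \<Prod>k. inverse (1 + d * inverse r ^ Suc k * z)) meromorphic_on UNIV"
      by (rule euler_reciprocal_product_meromorphic)
  qed
qed

end
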